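(* Let $(E,\mathscr{T},\le)$ be a locally compact $T_2$-preordered Tychonoff space with $G(\le)=\bigcap_{f\in\mathcal{F}}G_f$, and let $\mathcal{H}\subseteq\mathcal{F}$ with $G(\le)=\bigcap_{h\in\mathcal{H}}G_h$. Then the $\mathcal{H}$-compactification and the $i(\mathcal{H})$-compactification are equivalent.
   Context: $T_2$-preordered: the graph $G(\le)=\{(x,y):x\le y\}$ is closed in $E\times E$. $\mathcal{F}$ is the family of continuous isotone functions $f:E\to[0,1]$; $G_f=\{(x,y):f(x)\le f(y)\}$. $\mathcal{C}$ is the family of continuous functions $E\to[0,1]$ constant outside a compact set. For $\mathcal{H}\subseteq\mathcal{F}$ with $G(\le)=\bigcap_{h\in\mathcal{H}}G_h$, the $\mathcal{H}$-compactification is $c:E\to[0,1]^{\mathcal{H}\cup\mathcal{C}}$, $c(x)=(g(x))_{g\in\mathcal{H}\cup\mathcal{C}}$, with $cE$ the closure of $c(E)$, induced product topology, and preorder $x\le_c y$ iff $x_h\le y_h$ for all $h\in\mathcal{H}$. $i(\mathcal{H})$ denotes the set of $f\in\mathcal{F}$ such that $f\circ c^{-1}:c(E)\to[0,1]$ extends to a continuous isotone function on $(cE,\le_c)$, where $c$ is the $\mathcal{H}$-compactification (so $\mathcal{H}\subseteq i(\mathcal{H})$ and $i(\mathcal{H})$ also represents $\le$). For preorder compactifications, $c_1\le c_2$ means there is a continuous isotone $C:c_2E\to c_1E$ with $C\circ c_2=c_1$; equivalent means $c_1\le c_2$ and $c_2\le c_1$. *)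

theory Defs
  imports "HOL-Analysis.Analysis"
begin

text \<open>Real-valued functions on E are represented as functions that are extensional on
the carrier (value undefined outside), so that each function on E has a unique
representative.\<close>

definition unit_itv :: "real topology" where
  "unit_itv = top_of_set {0..1}"

definition T2_preordered :: "'a topology \<Rightarrow> ('a \<Rightarrow> 'a \<Rightarrow> bool) \<Rightarrow> bool" where
  "T2_preordered X le \<longleftrightarrow>
     (\<forall>x\<in>topspace X. le x x) \<and>
     (\<forall>x\<in>topspace X. \<forall>y\<in>topspace X. \<forall>z\<in>topspace X. le x y \<longrightarrow> le y z \<longrightarrow> le x z) \<and>
     closedin (prod_topology X X) {(x, y). x \<in> topspace X \<and> y \<in> topspace X \<and> le x y}"

definition isoF :: "'a topology \<Rightarrow> ('a \<Rightarrow> 'a \<Rightarrow> bool) \<Rightarrow> ('a \<Rightarrow> real) set" where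
  "isoF X le = {f. f \<in> extensional (topspace X) \<and> continuous_map X unit_itv f \<and>
      (\<forall>x\<in>topspace X. \<forall>y\<in>topspace X. le x y \<longrightarrow> f x \<le> f y)}"

definition cptC :: "'a topology \<Rightarrow> ('a \<Rightarrow> real) set" where
  "cptC X = {g. g \<in> extensional (topspace X) \<and> continuous_map X unit_itv g \<and>
      (\<exists>K a. compactin X K \<and> (\<forall>x\<in>topspace X - K. g x = a))}"

text \<open>G(le) = intersection of the G_h, h in H.\<close>
definition represents :: "'a topology \<Rightarrow> ('a \<Rightarrow> 'a \<Rightarrow> bool) \<Rightarrow> ('a \<Rightarrow> real) set \<Rightarrow> bool" where
  "represents X le H \<longleftrightarrow>
     (\<forall>x\<in>topspace X. \<forall>y\<in>topspace X. le x y \<longleftrightarrow> (\<forall>h\<in>H. h x \<le> h y))"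

text \<open>The H-compactification: the map c, the cube [0,1]^(H u C), the space cE and its preorder.\<close>
definition cmap :: "'a topology \<Rightarrow> ('a \<Rightarrow> real) set \<Rightarrow> 'a \<Rightarrow> (('a \<Rightarrow> real) \<Rightarrow> real)" where
  "cmap X H x = (\<lambda>g\<in>H \<union> cptC X. g x)"

definition cube :: "'a topology \<Rightarrow> ('a \<Rightarrow> real) set \<Rightarrow> (('a \<Rightarrow> real) \<Rightarrow> real) topology" where
  "cube X H = product_topology (\<lambda>_. unit_itv) (H \<union> cptC X)"

definition cE :: "'a topology \<Rightarrow> ('a \<Rightarrow> real) set \<Rightarrow> (('a \<Rightarrow> real) \<Rightarrow> real) set" where
  "cE X H = cube X H closure_of (cmap X H ` topspace X)"

definition cspace :: "'a topology \<Rightarrow> ('a \<Rightarrow> real) set \<Rightarrow> (('a \<Rightarrow> real) \<Rightarrow> real) topology" where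
  "cspace X H = subtopology (cube X H) (cE X H)"

definition cle :: "('a \<Rightarrow> real) set \<Rightarrow> (('a \<Rightarrow> real) \<Rightarrow> real) \<Rightarrow> (('a \<Rightarrow> real) \<Rightarrow> real) \<Rightarrow> bool" where
  "cle H p q \<longleftrightarrow> (\<forall>h\<in>H. p h \<le> q h)"

definition iH :: "'a topology \<Rightarrow> ('a \<Rightarrow> 'a \<Rightarrow> bool) \<Rightarrow> ('a \<Rightarrow> real) set \<Rightarrow> ('a \<Rightarrow> real) set" where
  "iH X le H = {f \<in> isoF X le. \<exists>F'. continuous_map (cspace X H) unit_itv F' \<and>
      (\<forall>p\<in>cE X H. \<forall>q\<in>cE X H. cle H p q \<longrightarrow> F' p \<le> F' q) \<and>
      (\<forall>x\<in>topspace X. F' (cmap X H x) = f x)}"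

text \<open>c1 <= c2 (c1 the H1-compactification, c2 the H2-compactification).\<close>
definition comp_le :: "'a topology \<Rightarrow> ('a \<Rightarrow> real) set \<Rightarrow> ('a \<Rightarrow> real) set \<Rightarrow> bool" where
  "comp_le X H1 H2 \<longleftrightarrow> (\<exists>Cm. continuous_map (cspace X H2) (cspace X H1) Cm \<and>
      (\<forall>p\<in>cE X H2. \<forall>q\<in>cE X H2. cle H2 p q \<longrightarrow> cle H1 (Cm p) (Cm q)) \<and>
      (\<forall>x\<in>topspace X. Cm (cmap X H2 x) = cmap X H1 x))"

definition comp_equiv :: "'a topology \<Rightarrow> ('a \<Rightarrow> real) set \<Rightarrow> ('a \<Rightarrow> real) set \<Rightarrow> bool" where
  "comp_equiv X H1 H2 \<longleftrightarrow> comp_le X H1 H2 \<and> comp_le X H2 H1"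

end

theory Submission
  imports Defs
begin

text \<open>A map between two such compactifications can be prescribed coordinatewise: for every
index g of the target cube give a continuous function on the source compactification that
extends g along the source embedding.  The resulting map sends c(E) onto c(E), hence the closure
into the closure, and it is isotone once the coordinates indexed by the order-defining functions
are.  From the i(H)-compactification to the H-compactification the coordinates are projections,
since H \<subseteq> i(H); in the other direction they are the isotone extensions that define i(H).
The argument is purely formal.\<close>

lemma cmap_in_cube:
  assumes "H \<subseteq> isoF X le" "x \<in> topspace X"
  shows "cmap X H x \<in> topspace (cube X H)"
proof -
  have "g x \<in> {0..1}" if "g \<in> H \<union> cptC X" for g
  proof -
    have "continuous_map X unit_itv g" using that assms(1) by (auto simp: isoF_def cptC_def)
    then show ?thesis using assms(2) by (auto simp: continuous_map_def unit_itv_def)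
  qed
  then show ?thesis by (auto simp: cube_def cmap_def topspace_product_topology unit_itv_def)
qed

lemma cE_subset_cube: "cE X H \<subseteq> topspace (cube X H)"
  by (simp add: cE_def closure_of_subset_topspace)

lemma topspace_cspace: "topspace (cspace X H) = cE X H"
  using cE_subset_cube by (auto simp: cspace_def)

lemma cmap_image_subset_cE:
  assumes "H \<subseteq> isoF X le"
  shows "cmap X H ` topspace X \<subseteq> cE X H"
  using cmap_in_cube[OF assms] closure_of_subset unfolding cE_def by (metis image_subsetI)

lemma cspace_closure_of_cmap_image:
  assumes "H \<subseteq> isoF X le"
  shows "cspace X H closure_of (cmap X H ` topspace X) = cE X H"
proof -
  have "cE X H \<inter> cmap X H ` topspace X = cmap X H ` topspace X"
    using cmap_image_subset_cE[OF assms] by blast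
  then show ?thesis unfolding cspace_def closure_of_subtopology by (simp add: cE_def)
qed

lemma continuous_map_cspace_projection:
  assumes "g \<in> H \<union> cptC X"
  shows "continuous_map (cspace X H) unit_itv (\<lambda>p. p g)"
  unfolding cspace_def cube_def
  by (rule continuous_map_from_subtopology[OF continuous_map_product_projection[OF assms]])

lemma continuous_map_into_cspace:
  assumes H1: "H1 \<subseteq> isoF X le"
    and cont: "continuous_map (cspace X H1) (cube X H2) Cm"
    and embed: "\<forall>x\<in>topspace X. Cm (cmap X H1 x) = cmap X H2 x"
  shows "continuous_map (cspace X H1) (cspace X H2) Cm"
proof -
  have "Cm ` cE X H1 \<subseteq> cube X H2 closure_of (Cm ` cmap X H1 ` topspace X)"
    using continuous_map_image_closure_subset[OF cont]
    by (metis cspace_closure_of_cmap_image[OF H1])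
  also have "Cm ` cmap X H1 ` topspace X = cmap X H2 ` topspace X"
    using embed by force
  finally have "Cm ` topspace (cspace X H1) \<subseteq> cE X H2"
    by (simp add: cE_def topspace_cspace)
  then show ?thesis
    unfolding cspace_def[of X H2] by (auto intro: continuous_map_into_subtopology[OF cont])
qed

lemma comp_le_by_coordinates:
  assumes H1: "H1 \<subseteq> isoF X le"
    and cont: "\<forall>g\<in>H2 \<union> cptC X. continuous_map (cspace X H1) unit_itv (\<Phi> g)"
    and embed: "\<forall>g\<in>H2 \<union> cptC X. \<forall>x\<in>topspace X. \<Phi> g (cmap X H1 x) = g x"
    and mono: "\<forall>h\<in>H2. \<forall>p\<in>cE X H1. \<forall>q\<in>cE X H1. cle H1 p q \<longrightarrow> \<Phi> h p \<le> \<Phi> h q"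
  shows "comp_le X H2 H1"
proof -
  define Cm where "Cm = (\<lambda>p. \<lambda>g\<in>H2 \<union> cptC X. \<Phi> g p)"
  have "continuous_map (cspace X H1) (cube X H2) Cm"
    unfolding Cm_def cube_def using cont by (subst continuous_map_componentwise) auto
  moreover have Cm_cmap: "\<forall>x\<in>topspace X. Cm (cmap X H1 x) = cmap X H2 x"
    using embed by (auto simp: Cm_def cmap_def)
  ultimately have "continuous_map (cspace X H1) (cspace X H2) Cm"
    by (rule continuous_map_into_cspace[OF H1])
  moreover have "\<forall>p\<in>cE X H1. \<forall>q\<in>cE X H1. cle H1 p q \<longrightarrow> cle H2 (Cm p) (Cm q)"
    using mono by (auto simp: cle_def Cm_def)
  ultimately show ?thesis
    using Cm_cmap unfolding comp_le_def by blast
qed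

lemma iH_subset_isoF: "iH X le H \<subseteq> isoF X le"
  by (auto simp: iH_def)

lemma subset_iH:
  assumes "H \<subseteq> isoF X le"
  shows "H \<subseteq> iH X le H"
proof
  fix h assume h: "h \<in> H"
  have "continuous_map (cspace X H) unit_itv (\<lambda>p. p h)"
    using h continuous_map_cspace_projection by blast
  moreover have "\<forall>x\<in>topspace X. cmap X H x h = h x"
    using h by (auto simp: cmap_def)
  ultimately show "h \<in> iH X le H"
    using h assms unfolding iH_def cle_def by (auto intro!: exI[of _ "\<lambda>p. p h"])
qed

lemma comp_le_subset:
  assumes "H' \<subseteq> isoF X le" "H \<subseteq> H'"
  shows "comp_le X H H'"
  using assms
  by (intro comp_le_by_coordinates[where \<Phi> = "\<lambda>g p. p g"])
     (auto simp: cmap_def cle_def intro: continuous_map_cspace_projection)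

lemma comp_le_iH:
  assumes H: "H \<subseteq> isoF X le"
  shows "comp_le X (iH X le H) H"
proof -
  have extensions: "\<forall>f\<in>iH X le H. \<exists>F'. continuous_map (cspace X H) unit_itv F' \<and>
      (\<forall>p\<in>cE X H. \<forall>q\<in>cE X H. cle H p q \<longrightarrow> F' p \<le> F' q) \<and>
      (\<forall>x\<in>topspace X. F' (cmap X H x) = f x)"
    unfolding iH_def by blast
  obtain Ext where Ext: "\<forall>f\<in>iH X le H. continuous_map (cspace X H) unit_itv (Ext f) \<and>
      (\<forall>p\<in>cE X H. \<forall>q\<in>cE X H. cle H p q \<longrightarrow> Ext f p \<le> Ext f q) \<and>
      (\<forall>x\<in>topspace X. Ext f (cmap X H x) = f x)"
    using bchoice[OF extensions] by blast
  define \<Phi> where "\<Phi> = (\<lambda>g p. if g \<in> iH X le H then Ext g p else p g)"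
  show ?thesis
  proof (rule comp_le_by_coordinates[OF H, where \<Phi> = \<Phi>])
    show "\<forall>g\<in>iH X le H \<union> cptC X. continuous_map (cspace X H) unit_itv (\<Phi> g)"
      using Ext by (auto simp: \<Phi>_def intro: continuous_map_cspace_projection)
    show "\<forall>g\<in>iH X le H \<union> cptC X. \<forall>x\<in>topspace X. \<Phi> g (cmap X H x) = g x"
      using Ext by (auto simp: \<Phi>_def cmap_def)
    show "\<forall>h\<in>iH X le H. \<forall>p\<in>cE X H. \<forall>q\<in>cE X H. cle H p q \<longrightarrow> \<Phi> h p \<le> \<Phi> h q"
      using Ext by (simp add: \<Phi>_def)
  qed
qed

theorem mainTheorem14:
  fixes X :: "'a topology" and le :: "'a \<Rightarrow> 'a \<Rightarrow> bool" and H :: "('a \<Rightarrow> real) set"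
  assumes "locally_compact_space X"
    and "completely_regular_space X" and "Hausdorff_space X"
    and "T2_preordered X le"
    and "represents X le (isoF X le)"
    and "H \<subseteq> isoF X le"
    and "represents X le H"
  shows "comp_equiv X H (iH X le H)"
proof -
  have "comp_le X H (iH X le H)"
    using comp_le_subset[OF iH_subset_isoF subset_iH[OF \<open>H \<subseteq> isoF X le\<close>]] .
  moreover have "comp_le X (iH X le H) H"
    using comp_le_iH[OF \<open>H \<subseteq> isoF X le\<close>] .
  ultimately show ?thesis
    by (simp add: comp_equiv_def)
qed

end
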